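(* Consider the opinion--action model described in the context, with $\phi\in(0,1)$ and arbitrary initial values $x_i(0),y_i(0)\in[0,1]$, and let $P(t)$, $t\ge 1$, be its augmented state matrices and $\mathbf{z}(t)$ its augmented state. Suppose there exists a finite time $T\in\mathbb{Z}_{>0}$ after which the structure of the digraph $\mathcal{G}(P(t))$ stabilizes, i.e., for all $t\ge T$, $\mathcal{G}(P(t))$ has a fixed number of strongly connected components and the node set of each strongly connected component is the same for all $t\ge T$. Then the system converges to one of the following steady states: (i) Consensus: if $\mathcal{G}(P(t))$ remains strongly connected (for $t\ge T$), then for every $i\in\{1,\dots,2n\}$ the limit $z_i^\ast=\lim_{t\to\infty}z_i(t)$ exists and $z_i^\ast=z_j^\ast$ for all $i,j\in\{1,\dots,2n\}$. (ii) Clustering: if the condensation digraph of $\mathcal{G}(P(t))$ (for $t\ge T$) consists of one sink and one or more singleton sources, then, letting $\Theta$ be the set of nodes forming singleton sources and $\Omega$ the set of nodes of the sink component, $z_i(t)=z_i(T)$ for all $i\in\Theta$ and all $t\ge T$, and $\lim_{t\to\infty}\mathrm{dist}\big(z_j(t),\operatorname{conv}\{z_i(T)\mid i\in\Theta\}\big)=0$ for all $j\in\Omega$.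
   Context: Fix an integer $n\ge 1$, agent set $\mathcal{V}=\{1,\dots,n\}$, a confidence threshold $\epsilon\in[0,1]$ and a decision weight $\phi\in[0,1]$. Each agent $i$ has opinion $x_i(t)\in[0,1]$ and action $y_i(t)\in[0,1]$. For $t\in\mathbb{Z}_{\ge0}$ the model evolves by: $\mathcal{N}_i(t)=\{j\in\mathcal{V}\mid j\neq i,\ |x_i(t)-y_j(t)|\le\epsilon\}$; $x_i(t+1)=\frac{x_i(t)+\sum_{j\in\mathcal{N}_i(t)}y_j(t)}{|\mathcal{N}_i(t)|+1}$; $y_i(t+1)=\phi\,x_i(t+1)+(1-\phi)\,y_{\mathrm{avg}}(t)$ with $y_{\mathrm{avg}}(t)=\frac1n\sum_{k=1}^n y_k(t)$. For $t\ge1$ the augmented state is $\mathbf{z}(t)\in\mathbb{R}^{2n}$ with $z_i(t)=x_i(t)$ and $z_{n+i}(t)=y_i(t-1)$ for $i\in\mathcal{V}$; it satisfies $\mathbf{z}(t+1)=P(t)\mathbf{z}(t)$ for $t\ge1$, where $P(t)=\begin{bmatrix}P_{11}(t)&P_{12}(t)\\ P_{21}&P_{22}\end{bmatrix}$ with $n\times n$ blocks: $[P_{11}(t)]_{ij}=\frac{1}{|\mathcal{N}_i(t)|+1}$ if $j=i$, $\frac{\phi}{|\mathcal{N}_i(t)|+1}$ if $j\in\mathcal{N}_i(t)$, and $0$ otherwise; $[P_{12}(t)]_{ij}=\frac{(1-\phi)|\mathcal{N}_i(t)|}{(|\mathcal{N}_i(t)|+1)n}$ for all $i,j$; $P_{21}=\phi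 I_n$; $P_{22}=\frac{1-\phi}{n}\mathbf{1}_n\mathbf{1}_n^\top$. For a nonnegative matrix $A\in\mathbb{R}^{m\times m}$, $\mathcal{G}(A)$ is the digraph on $\{1,\dots,m\}$ with a directed edge $(j,i)$ (from $j$ to $i$) iff $a_{ij}>0$. A strongly connected component (SCC) is a maximal strongly connected subgraph; the condensation digraph has the SCCs as nodes and an edge from SCC$_a$ to SCC$_b$ ($a\ne b$) iff some node of SCC$_a$ has an edge to some node of SCC$_b$. A source is a node with no incoming edges, a sink a node with no outgoing edges; a singleton SCC has one node. $\operatorname{conv}$ denotes convex hull and $\mathrm{dist}(x,S)=\inf_{y\in S}|x-y|$. *)

theory Defs
  imports "HOL-Analysis.Analysis"
begin

text \<open>Agents are indexed 0..n-1 (paper: 1..n); augmented indices 0..2n-1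
  (paper: 1..2n), index i < n is x_i, index n+i is the y-component.\<close>

definition nbrs :: "nat \<Rightarrow> real \<Rightarrow> (nat \<Rightarrow> real) \<Rightarrow> (nat \<Rightarrow> real) \<Rightarrow> nat \<Rightarrow> nat set" where
  "nbrs n eps x y i = {j. j < n \<and> j \<noteq> i \<and> \<bar>x i - y j\<bar> \<le> eps}"

definition step :: "nat \<Rightarrow> real \<Rightarrow> real \<Rightarrow> (nat \<Rightarrow> real) \<times> (nat \<Rightarrow> real)
    \<Rightarrow> (nat \<Rightarrow> real) \<times> (nat \<Rightarrow> real)" where
  "step n eps phi s =
     (let x = fst s; y = snd s;
          x' = (\<lambda>i. (x i + (\<Sum>j\<in>nbrs n eps x y i. y j)) / (real (card (nbrs n eps x y i)) + 1))
      in (x', \<lambda>i. phi * x' i + (1 - phi) * ((\<Sum>k<n. y k) / real n)))"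

primrec traj :: "nat \<Rightarrow> real \<Rightarrow> real \<Rightarrow> (nat \<Rightarrow> real) \<Rightarrow> (nat \<Rightarrow> real) \<Rightarrow> nat
    \<Rightarrow> (nat \<Rightarrow> real) \<times> (nat \<Rightarrow> real)" where
  "traj n eps phi x0 y0 0 = (x0, y0)"
| "traj n eps phi x0 y0 (Suc t) = step n eps phi (traj n eps phi x0 y0 t)"

definition xs where "xs n eps phi x0 y0 t = fst (traj n eps phi x0 y0 t)"
definition ys where "ys n eps phi x0 y0 t = snd (traj n eps phi x0 y0 t)"

text \<open>augmented state z(t), meaningful for t \<ge> 1\<close>
definition zaug :: "nat \<Rightarrow> real \<Rightarrow> real \<Rightarrow> (nat \<Rightarrow> real) \<Rightarrow> (nat \<Rightarrow> real) \<Rightarrow> nat \<Rightarrow> nat \<Rightarrow> real" where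
  "zaug n eps phi x0 y0 t i =
     (if i < n then xs n eps phi x0 y0 t i else ys n eps phi x0 y0 (t - 1) (i - n))"

definition Pmat :: "nat \<Rightarrow> real \<Rightarrow> real \<Rightarrow> (nat \<Rightarrow> real) \<Rightarrow> (nat \<Rightarrow> real) \<Rightarrow> nat \<Rightarrow> nat \<Rightarrow> nat \<Rightarrow> real" where
  "Pmat n eps phi x0 y0 t i j =
     (let N = nbrs n eps (xs n eps phi x0 y0 t) (ys n eps phi x0 y0 t) in
      if i < n \<and> j < n then
        (if j = i then 1 / (real (card (N i)) + 1)
         else if j \<in> N i then phi / (real (card (N i)) + 1) else 0)
      else if i < n \<and> n \<le> j \<and> j < 2 * n then
        (1 - phi) * real (card (N i)) / ((real (card (N i)) + 1) * real n)
      else if n \<le> i \<and> i < 2 * n \<and> j < n then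
        (if j = i - n then phi else 0)
      else if n \<le> i \<and> i < 2 * n \<and> n \<le> j \<and> j < 2 * n then
        (1 - phi) / real n
      else 0)"

definition gedges :: "(nat \<Rightarrow> nat \<Rightarrow> real) \<Rightarrow> nat \<Rightarrow> (nat \<times> nat) set" where
  "gedges A m = {(j, i). j < m \<and> i < m \<and> A i j > 0}"

definition strongly_connected_mat :: "(nat \<Rightarrow> nat \<Rightarrow> real) \<Rightarrow> nat \<Rightarrow> bool" where
  "strongly_connected_mat A m = (\<forall>i<m. \<forall>j<m. (i, j) \<in> (gedges A m)\<^sup>*)"

definition scc_of :: "(nat \<Rightarrow> nat \<Rightarrow> real) \<Rightarrow> nat \<Rightarrow> nat \<Rightarrow> nat set" where
  "scc_of A m i = {j. j < m \<and> (i, j) \<in> (gedges A m)\<^sup>* \<and> (j, i) \<in> (gedges A m)\<^sup>*}"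

definition sccs :: "(nat \<Rightarrow> nat \<Rightarrow> real) \<Rightarrow> nat \<Rightarrow> nat set set" where
  "sccs A m = scc_of A m ` {..<m}"

definition cond_edge :: "(nat \<Rightarrow> nat \<Rightarrow> real) \<Rightarrow> nat \<Rightarrow> nat set \<Rightarrow> nat set \<Rightarrow> bool" where
  "cond_edge A m S S' = (S \<noteq> S' \<and> (\<exists>a\<in>S. \<exists>b\<in>S'. (a, b) \<in> gedges A m))"

definition cond_source :: "(nat \<Rightarrow> nat \<Rightarrow> real) \<Rightarrow> nat \<Rightarrow> nat set \<Rightarrow> bool" where
  "cond_source A m S = (\<forall>S'\<in>sccs A m. \<not> cond_edge A m S' S)"

definition cond_sink :: "(nat \<Rightarrow> nat \<Rightarrow> real) \<Rightarrow> nat \<Rightarrow> nat set \<Rightarrow> bool" where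
  "cond_sink A m S = (\<forall>S'\<in>sccs A m. \<not> cond_edge A m S S')"

definition one_sink_singleton_sources :: "(nat \<Rightarrow> nat \<Rightarrow> real) \<Rightarrow> nat \<Rightarrow> nat set \<Rightarrow> bool" where
  "one_sink_singleton_sources A m \<Omega> =
     (\<Omega> \<in> sccs A m \<and> cond_sink A m \<Omega> \<and>
      (\<forall>S\<in>sccs A m. cond_sink A m S \<longrightarrow> S = \<Omega>) \<and>
      (\<forall>S\<in>sccs A m. S \<noteq> \<Omega> \<longrightarrow> card S = 1 \<and> cond_source A m S) \<and>
      (\<exists>S\<in>sccs A m. S \<noteq> \<Omega>))"

end

(*
  Let M(t) and m(t) be the largest and smallest entry of the augmented state z(t + 1). Every
  update is a convex combination of current entries, so M is nonincreasing and m nondecreasing.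
  An agent without neighbours has no incoming edge in G(P(t)) other than its self-loop, while
  every other agent receives an edge from every action node. Hence strong connectivity rules out
  isolated agents, and then each opinion averages itself with at least one action: the spread
  M - m shrinks by the factor (1 + phi) / 2 per step, giving consensus. In the clustering case the
  singleton sources are exactly the isolated agents, whose opinions are frozen. The frozen agent
  with the largest opinion b drags the mean action, and within two steps every entry, towards b,
  so M(t) tends to b; symmetrically m(t) tends to the smallest frozen opinion.
*)
theory Submission
  imports Defs
begin

lemma mean_le:
  fixes x u :: real
  assumes "finite F" "x \<le> u" "\<And>j. j \<in> F \<Longrightarrow> f j \<le> u"
  shows "(x + sum f F) / (real (card F) + 1) \<le> u"
proof -
  have "sum f F \<le> real (card F) * u"
    using sum_mono[of F f "\<lambda>_. u"] assms(3) by simp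
  then show ?thesis
    using assms(2) by (simp add: pos_divide_le_eq algebra_simps)
qed

lemma mean_le_midpoint:
  fixes x u w :: real
  assumes "finite F" "F \<noteq> {}" "x \<le> u" "w \<le> u" "\<And>j. j \<in> F \<Longrightarrow> f j \<le> w"
  shows "(x + sum f F) / (real (card F) + 1) \<le> (u + w) / 2"
proof -
  define K where "K = real (card F)"
  have K: "1 \<le> K"
    using assms(1,2) by (simp add: K_def Suc_le_eq card_gt_0_iff)
  have "sum f F \<le> K * w"
    using sum_mono[of F f "\<lambda>_. w"] assms(5) by (simp add: K_def)
  then have "x + sum f F \<le> u + K * w"
    using assms(3) by simp
  also have "\<dots> \<le> (K + 1) * ((u + w) / 2)"
  proof -
    have "0 \<le> (K - 1) * (u - w)"
      using K assms(4) by simp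
    then show ?thesis by (simp add: algebra_simps)
  qed
  finally show ?thesis
    by (simp add: K_def pos_divide_le_eq mult.commute)
qed

lemma decseq_tendsto_0_if_eventually_contracting:
  fixes g :: "nat \<Rightarrow> real"
  assumes "decseq g" "\<And>s. 0 \<le> g s" "q < 1" "\<And>s. s \<ge> T \<Longrightarrow> g (s + k) \<le> q * g s"
  shows "g \<longlonglongrightarrow> 0"
proof -
  obtain L where L: "g \<longlonglongrightarrow> L" "\<forall>s. L \<le> g s"
    using decseq_convergent[OF assms(1)] assms(2) by blast
  have "0 \<le> L"
    using LIMSEQ_le_const[OF L(1)] assms(2) by blast
  have "L \<le> q * L"
    using LIMSEQ_le[OF LIMSEQ_ignore_initial_segment[OF L(1), of k] tendsto_mult_left[OF L(1), of q]]
      assms(4) by blast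
  then have "(1 - q) * L \<le> 0"
    by (simp add: algebra_simps)
  with \<open>0 \<le> L\<close> \<open>q < 1\<close> have "L = 0"
    by (simp add: mult_le_0_iff)
  with L(1) show ?thesis by simp
qed

lemma infdist_tendsto_0_if_squeezed:
  fixes f lo hi :: "nat \<Rightarrow> real"
  assumes "convex S" "a \<in> S" "b \<in> S" "lo \<longlonglongrightarrow> a" "hi \<longlonglongrightarrow> b"
    and "\<And>s. lo s \<le> f s" "\<And>s. f s \<le> hi s"
  shows "(\<lambda>s. infdist (f s) S) \<longlonglongrightarrow> 0"
proof (rule tendsto_sandwich[OF _ _ tendsto_const])
  have "infdist (f s) S \<le> \<bar>hi s - b\<bar> + \<bar>lo s - a\<bar>" for s
  proof -
    consider "b < f s" | "f s < a" | "a \<le> f s" "f s \<le> b" by linarith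
    then show ?thesis
    proof cases
      case 1
      then show ?thesis
        using infdist_le[OF assms(3), of "f s"] assms(7)[of s] by (simp add: dist_real_def)
    next
      case 2
      then show ?thesis
        using infdist_le[OF assms(2), of "f s"] assms(6)[of s] by (simp add: dist_real_def)
    next
      case 3
      then have "f s \<in> S"
        using connectedD_interval[OF convex_connected[OF assms(1)] assms(2,3)] by simp
      then show ?thesis by simp
    qed
  qed
  then show "\<forall>\<^sub>F s in sequentially. infdist (f s) S \<le> \<bar>hi s - b\<bar> + \<bar>lo s - a\<bar>"
    by simp
  have "(\<lambda>s. \<bar>hi s - b\<bar> + \<bar>lo s - a\<bar>) \<longlonglongrightarrow> \<bar>b - b\<bar> + \<bar>a - a\<bar>"
    by (intro tendsto_intros assms(4,5))
  then show "(\<lambda>s. \<bar>hi s - b\<bar> + \<bar>lo s - a\<bar>) \<longlonglongrightarrow> 0"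
    by simp
qed (simp add: infdist_nonneg)

lemma rtrancl_no_in_edges:
  assumes "\<And>a. (a, i) \<in> E \<Longrightarrow> a = i" "(a, i) \<in> E\<^sup>*"
  shows "a = i"
proof -
  have "b = i \<longrightarrow> a = i" if "(a, b) \<in> E\<^sup>*" for b
    using that by (induction rule: rtrancl_induct) (auto dest: assms(1))
  with assms(2) show ?thesis by blast
qed

lemma scc_of_self: "k < m \<Longrightarrow> k \<in> scc_of A m k"
  by (simp add: scc_of_def)

lemma scc_of_no_in_edges:
  assumes "i < m" "\<And>a. (a, i) \<in> gedges A m \<Longrightarrow> a = i"
  shows "scc_of A m i = {i}"
proof
  show "scc_of A m i \<subseteq> {i}"
    using rtrancl_no_in_edges[of i "gedges A m"] assms(2) by (auto simp: scc_of_def)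
qed (simp add: scc_of_self assms(1))

lemma sccs_bounded: "S \<in> sccs A m \<Longrightarrow> k \<in> S \<Longrightarrow> k < m"
  by (auto simp: sccs_def scc_of_def)

lemma sccs_nonempty: "S \<in> sccs A m \<Longrightarrow> S \<noteq> {}"
  using scc_of_self by (auto simp: sccs_def)

lemma cond_source_singleton_in_edge:
  assumes "cond_source A m {i}" "(a, i) \<in> gedges A m"
  shows "a = i"
proof (rule ccontr)
  assume "a \<noteq> i"
  have "a < m"
    using assms(2) by (simp add: gedges_def)
  then have "a \<in> scc_of A m a"
    by (rule scc_of_self)
  with \<open>a \<noteq> i\<close> assms(2) have "cond_edge A m (scc_of A m a) {i}"
    unfolding cond_edge_def by blast
  moreover have "scc_of A m a \<in> sccs A m"
    using \<open>a < m\<close> by (simp add: sccs_def)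
  ultimately show False
    using assms(1) unfolding cond_source_def by blast
qed

lemma cond_sink_singleton_out_edge:
  assumes "cond_sink A m {i}" "(i, b) \<in> gedges A m"
  shows "b = i"
proof (rule ccontr)
  assume "b \<noteq> i"
  have "b < m"
    using assms(2) by (simp add: gedges_def)
  then have "b \<in> scc_of A m b"
    by (rule scc_of_self)
  with \<open>b \<noteq> i\<close> assms(2) have "cond_edge A m {i} (scc_of A m b)"
    unfolding cond_edge_def by blast
  moreover have "scc_of A m b \<in> sccs A m"
    using \<open>b < m\<close> by (simp add: sccs_def)
  ultimately show False
    using assms(1) unfolding cond_sink_def by blast
qed

lemma one_sink_singleton_sources_nonempty:
  assumes "one_sink_singleton_sources A m \<Omega>"
  shows "\<Union>(sccs A m - {\<Omega>}) \<noteq> {}"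
proof -
  obtain S where "S \<in> sccs A m" "S \<noteq> \<Omega>"
    using assms by (auto simp: one_sink_singleton_sources_def)
  moreover have "S \<noteq> {}"
    using sccs_nonempty[OF \<open>S \<in> sccs A m\<close>] .
  ultimately show ?thesis by blast
qed

text \<open>The neighbour sets are arbitrary here: the confidence rule only matters for the graph
  of \<open>P(t)\<close>.\<close>

locale opinion_action =
  fixes n :: nat and phi :: real and X Y :: "nat \<Rightarrow> nat \<Rightarrow> real"
    and N :: "nat \<Rightarrow> nat \<Rightarrow> nat set"
  assumes n_pos: "1 \<le> n" and phi_pos: "0 < phi" and phi_less_1: "phi < 1"
    and nbrs_agents: "\<And>t i. N t i \<subseteq> {..<n}"
    and X_Suc: "\<And>t i. i < n \<Longrightarrow>
      X (Suc t) i = (X t i + (\<Sum>j\<in>N t i. Y t j)) / (real (card (N t i)) + 1)"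
    and Y_Suc: "\<And>t i. i < n \<Longrightarrow>
      Y (Suc t) i = phi * X (Suc t) i + (1 - phi) * ((\<Sum>k<n. Y t k) / real n)"
begin

lemma finite_nbrs: "finite (N t i)"
  using nbrs_agents finite_subset by blast

definition Y_avg :: "nat \<Rightarrow> real" where
  "Y_avg t = (\<Sum>k<n. Y t k) / real n"

text \<open>The extreme entries of the augmented state \<open>z(t + 1) = (x(t + 1), y(t))\<close>.\<close>

definition state_max :: "nat \<Rightarrow> real" where
  "state_max t = Max (X (Suc t) ` {..<n} \<union> Y t ` {..<n})"

definition state_min :: "nat \<Rightarrow> real" where
  "state_min t = Min (X (Suc t) ` {..<n} \<union> Y t ` {..<n})"

lemma agents_nonempty: "{..<n} \<noteq> {}"
  using n_pos by (auto simp: lessThan_empty_iff)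

lemma Y_Suc_avg: "i < n \<Longrightarrow> Y (Suc t) i = phi * X (Suc t) i + (1 - phi) * Y_avg t"
  using Y_Suc by (simp add: Y_avg_def)

lemma Y_avg_Suc: "Y_avg (Suc t) = phi * ((\<Sum>k<n. X (Suc t) k) / real n) + (1 - phi) * Y_avg t"
proof -
  have "(\<Sum>k<n. Y (Suc t) k) = phi * (\<Sum>k<n. X (Suc t) k) + real n * ((1 - phi) * Y_avg t)"
    by (simp add: Y_Suc_avg sum.distrib sum_distrib_left)
  then have "Y_avg (Suc t) = (phi * (\<Sum>k<n. X (Suc t) k) + real n * ((1 - phi) * Y_avg t)) / real n"
    by (simp add: Y_avg_def)
  then show ?thesis
    using n_pos by (simp add: add_divide_distrib)
qed

lemma le_state_max:
  assumes "k < n"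
  shows "X (Suc t) k \<le> state_max t" and "Y t k \<le> state_max t"
  using assms by (auto simp: state_max_def intro!: Max_ge)

lemma state_max_le:
  assumes "\<And>k. k < n \<Longrightarrow> X (Suc t) k \<le> u" "\<And>k. k < n \<Longrightarrow> Y t k \<le> u"
  shows "state_max t \<le> u"
  using assms agents_nonempty by (auto simp: state_max_def)

lemma state_min_le:
  assumes "k < n"
  shows "state_min t \<le> X (Suc t) k" and "state_min t \<le> Y t k"
  using assms by (auto simp: state_min_def intro!: Min_le)

lemma state_min_le_state_max: "state_min t \<le> state_max t"
  using state_min_le(1)[of 0 t] le_state_max(1)[of 0 t] n_pos by simp

lemma Y_avg_le:
  assumes "\<And>k. k < n \<Longrightarrow> Y t k \<le> u"
  shows "Y_avg t \<le> u"
proof -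
  have "(\<Sum>k<n. Y t k) \<le> real n * u"
    using sum_mono[of "{..<n}" "Y t" "\<lambda>_. u"] assms by simp
  then show ?thesis
    using n_pos by (simp add: Y_avg_def pos_divide_le_eq mult.commute)
qed

lemma Y_avg_le_state_max: "Y_avg t \<le> state_max t"
  using Y_avg_le le_state_max(2) by blast

lemma step_bounds:
  assumes X_le: "\<And>k. k < n \<Longrightarrow> X (Suc t) k \<le> u" and avg_le: "Y_avg t \<le> u" and "i < n"
  shows "Y (Suc t) i \<le> u - (1 - phi) * (u - Y_avg t)"
    and "X (Suc (Suc t)) i \<le> u"
    and "N (Suc t) i \<noteq> {} \<Longrightarrow> X (Suc (Suc t)) i \<le> u - (1 - phi) / 2 * (u - Y_avg t)"
proof -
  have Y_le: "Y (Suc t) j \<le> u - (1 - phi) * (u - Y_avg t)" if "j < n" for j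
  proof -
    have "phi * X (Suc t) j \<le> phi * u"
      using X_le[OF that] phi_pos by simp
    then show ?thesis
      using Y_Suc_avg[OF that] by (simp add: algebra_simps)
  qed
  then show "Y (Suc t) i \<le> u - (1 - phi) * (u - Y_avg t)"
    using \<open>i < n\<close> .
  have Y_nbr_le: "Y (Suc t) j \<le> u - (1 - phi) * (u - Y_avg t)" if "j \<in> N (Suc t) i" for j
    using Y_le nbrs_agents that by blast
  have gap: "u - (1 - phi) * (u - Y_avg t) \<le> u"
    using avg_le phi_less_1 by simp
  show "X (Suc (Suc t)) i \<le> u"
    unfolding X_Suc[OF \<open>i < n\<close>, of "Suc t"]
    by (rule mean_le[OF finite_nbrs X_le[OF \<open>i < n\<close>]]) (use Y_nbr_le gap in fastforce)
  assume "N (Suc t) i \<noteq> {}"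
  have "X (Suc (Suc t)) i \<le> (u + (u - (1 - phi) * (u - Y_avg t))) / 2"
    unfolding X_Suc[OF \<open>i < n\<close>, of "Suc t"]
    by (rule mean_le_midpoint[OF finite_nbrs \<open>N (Suc t) i \<noteq> {}\<close> X_le[OF \<open>i < n\<close>] gap Y_nbr_le])
  then show "X (Suc (Suc t)) i \<le> u - (1 - phi) / 2 * (u - Y_avg t)"
    by (simp add: field_simps)
qed

lemma state_max_Suc_le: "state_max (Suc t) \<le> state_max t"
proof (rule state_max_le)
  fix k assume k: "k < n"
  note bounds = step_bounds[of t "state_max t" k, OF le_state_max(1) Y_avg_le_state_max k]
  show "X (Suc (Suc t)) k \<le> state_max t"
    by (rule bounds(2))
  have "0 \<le> (1 - phi) * (state_max t - Y_avg t)"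
    using Y_avg_le_state_max[of t] phi_less_1 by simp
  then show "Y (Suc t) k \<le> state_max t"
    using bounds(1) by linarith
qed

lemma decseq_state_max: "decseq state_max"
  using state_max_Suc_le by (simp add: decseq_SucI)

lemma state_max_Suc_le_margin:
  assumes X_le: "\<And>k. k < n \<Longrightarrow> X (Suc t) k \<le> u" and avg_le: "Y_avg t \<le> u"
    and margin: "w \<le> (1 - phi) / 2 * (u - Y_avg t)"
    and isolated_le: "\<And>k. k < n \<Longrightarrow> N (Suc t) k = {} \<Longrightarrow> X (Suc (Suc t)) k \<le> u - w"
  shows "state_max (Suc t) \<le> u - w"
proof (rule state_max_le)
  fix k assume k: "k < n"
  note bounds = step_bounds[OF X_le avg_le k]
  have "(1 - phi) / 2 * (u - Y_avg t) \<le> (1 - phi) * (u - Y_avg t)"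
    using avg_le phi_less_1 by (intro mult_right_mono) auto
  then show "Y (Suc t) k \<le> u - w"
    using bounds(1) margin by linarith
  show "X (Suc (Suc t)) k \<le> u - w"
  proof (cases "N (Suc t) k = {}")
    case False
    then show ?thesis
      using bounds(3) margin by linarith
  qed (rule isolated_le[OF k])
qed

lemma state_max_Suc_contracting:
  assumes "\<And>i. i < n \<Longrightarrow> N (Suc t) i \<noteq> {}"
  shows "state_max (Suc t) \<le> state_max t - (1 - phi) / 2 * (state_max t - Y_avg t)"
proof (rule state_max_Suc_le_margin[OF le_state_max(1) Y_avg_le_state_max order_refl])
  fix k assume "k < n" "N (Suc t) k = {}"
  with assms show "X (Suc (Suc t)) k \<le> state_max t - (1 - phi) / 2 * (state_max t - Y_avg t)"
    by simp
qed

lemma X_frozen: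
  assumes isolated: "\<And>t. T \<le> t \<Longrightarrow> {i. i < n \<and> N t i = {}} = I" and "i \<in> I" "T \<le> t"
  shows "X t i = X T i"
  using \<open>T \<le> t\<close>
proof (induction t rule: dec_induct)
  case (step t)
  then have "i \<in> {i. i < n \<and> N t i = {}}"
    using isolated[OF step(1)] \<open>i \<in> I\<close> by simp
  then have "i < n" "N t i = {}"
    by simp_all
  then show ?case
    using X_Suc step(3) by simp
qed simp

lemma X_frozen_le_state_max:
  assumes isolated: "\<And>t. T \<le> t \<Longrightarrow> {i. i < n \<and> N t i = {}} = I" and "i \<in> I"
  shows "X T i \<le> state_max t"
proof -
  have "i \<in> {i. i < n \<and> N T i = {}}"
    using isolated[of T] \<open>i \<in> I\<close> by simp
  then have "i < n"
    by simp
  have "X (Suc (max t T)) i = X T i"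
    by (rule X_frozen[where T = T and I = I, OF isolated \<open>i \<in> I\<close> le_SucI[OF max.cobounded2]])
  then have "X T i = X (Suc (max t T)) i"
    by simp
  also have "\<dots> \<le> state_max (max t T)"
    by (rule le_state_max(1)[OF \<open>i < n\<close>])
  also have "\<dots> \<le> state_max t"
    using decseq_state_max by (simp add: decseq_def)
  finally show ?thesis .
qed

lemma Y_avg_Suc_le:
  assumes X_le: "\<And>k. k < n \<Longrightarrow> X (Suc t) k \<le> u" and "i < n" "X (Suc t) i \<le> b"
    and avg_le: "Y_avg t \<le> u"
  shows "Y_avg (Suc t) \<le> u - phi * (u - b) / real n"
proof -
  have "u - b \<le> u - X (Suc t) i"
    using assms(3) by simp
  also have "\<dots> \<le> (\<Sum>k<n. u - X (Suc t) k)"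
    by (rule member_le_sum) (use \<open>i < n\<close> X_le in auto)
  also have "\<dots> = real n * u - (\<Sum>k<n. X (Suc t) k)"
    by (simp add: sum_subtractf)
  finally have "(\<Sum>k<n. X (Suc t) k) / real n \<le> (real n * u - (u - b)) / real n"
    by (intro divide_right_mono) auto
  also have "\<dots> = u - (u - b) / real n"
    using n_pos by (simp add: diff_divide_distrib)
  finally have "phi * ((\<Sum>k<n. X (Suc t) k) / real n) + (1 - phi) * Y_avg t
      \<le> phi * (u - (u - b) / real n) + (1 - phi) * u"
    using avg_le phi_pos phi_less_1 by (intro add_mono mult_left_mono) auto
  then show ?thesis
    by (simp add: Y_avg_Suc algebra_simps)
qed

text \<open>The agent \<open>i\<^sub>0\<close>, stuck below \<open>b\<close>, pulls the mean action towards \<open>b\<close>, and one step later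
  every opinion with a neighbour follows it.\<close>

lemma state_max_two_steps_contracting:
  assumes "i\<^sub>0 < n" "X (Suc t) i\<^sub>0 \<le> b"
    and isolated_le: "\<And>k. k < n \<Longrightarrow> N (Suc (Suc t)) k = {} \<Longrightarrow> X (Suc (Suc (Suc t))) k \<le> b"
    and "b \<le> state_max t"
  shows "state_max (Suc (Suc t)) - b \<le> (1 - (1 - phi) * phi / (2 * n)) * (state_max t - b)"
proof -
  define u where "u = state_max t"
  define d where "d = (1 - phi) * phi / (2 * n)"
  have "b \<le> u"
    using assms(4) by (simp add: u_def)
  have X_le: "X (Suc (Suc t)) k \<le> u" if "k < n" for k
    using le_state_max(1)[OF that, of "Suc t"] state_max_Suc_le[of t] by (simp add: u_def)
  have avg_le: "Y_avg (Suc t) \<le> u - phi * (u - b) / real n"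
    using Y_avg_Suc_le[OF le_state_max(1) assms(1,2) Y_avg_le_state_max] by (simp add: u_def)
  moreover have "0 \<le> phi * (u - b) / real n"
    using phi_pos \<open>b \<le> u\<close> by simp
  ultimately have "Y_avg (Suc t) \<le> u"
    by linarith
  have "d * (u - b) = (1 - phi) / 2 * (phi * (u - b) / real n)"
    by (simp add: d_def)
  also have "\<dots> \<le> (1 - phi) / 2 * (u - Y_avg (Suc t))"
    using avg_le phi_less_1 by (intro mult_left_mono) auto
  finally have margin: "d * (u - b) \<le> (1 - phi) / 2 * (u - Y_avg (Suc t))" .
  have "0 \<le> d" "d \<le> 1"
    using mult_le_one[of "1 - phi" phi] phi_pos phi_less_1 n_pos by (simp_all add: d_def)
  then have "d * (u - b) \<le> u - b"
    using \<open>b \<le> u\<close> by (simp add: mult_left_le_one_le)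
  have "state_max (Suc (Suc t)) \<le> u - d * (u - b)"
  proof (rule state_max_Suc_le_margin[OF X_le \<open>Y_avg (Suc t) \<le> u\<close> margin])
    fix k assume "k < n" "N (Suc (Suc t)) k = {}"
    then have "X (Suc (Suc (Suc t))) k \<le> b"
      by (rule isolated_le)
    with \<open>d * (u - b) \<le> u - b\<close> show "X (Suc (Suc (Suc t))) k \<le> u - d * (u - b)"
      by linarith
  qed
  moreover have "(1 - d) * (u - b) = u - d * (u - b) - b"
    by (simp add: algebra_simps)
  ultimately show ?thesis
    unfolding d_def[symmetric] u_def[symmetric] by linarith
qed

lemma state_max_tendsto_frozen_max:
  assumes isolated: "\<And>t. T \<le> t \<Longrightarrow> {i. i < n \<and> N t i = {}} = I" and "I \<noteq> {}"
  shows "state_max \<longlonglongrightarrow> Max (X T ` I)"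
proof -
  define b where "b = Max (X T ` I)"
  have "I \<subseteq> {..<n}"
    using isolated[of T] by auto
  then have "finite I"
    using finite_subset by blast
  then have "b \<in> X T ` I"
    using Max_in \<open>I \<noteq> {}\<close> by (simp add: b_def)
  then obtain i\<^sub>0 where "i\<^sub>0 \<in> I" and "X T i\<^sub>0 = b"
    by blast
  have below: "X t i \<le> b" if "i \<in> I" "T \<le> t" for i t
    using \<open>finite I\<close> X_frozen[where T = T and I = I, OF isolated that] that(1) by (simp add: b_def)
  have b_le: "b \<le> state_max t" for t
    using X_frozen_le_state_max[where T = T and I = I, OF isolated \<open>i\<^sub>0 \<in> I\<close>] \<open>X T i\<^sub>0 = b\<close>
    by simp
  have "(\<lambda>t. state_max t - b) \<longlonglongrightarrow> 0"
  proof (rule decseq_tendsto_0_if_eventually_contracting[where k = 2])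
    show "decseq (\<lambda>t. state_max t - b)"
      using decseq_state_max by (simp add: decseq_def)
    show "0 \<le> state_max t - b" for t
      using b_le[of t] by simp
    show "1 - (1 - phi) * phi / (2 * n) < 1"
      using phi_pos phi_less_1 n_pos by simp
    show "state_max (t + 2) - b \<le> (1 - (1 - phi) * phi / (2 * n)) * (state_max t - b)"
      if "T \<le> t" for t
    proof -
      have "{k. k < n \<and> N (Suc (Suc t)) k = {}} = I"
        using isolated \<open>T \<le> t\<close> by simp
      then have "X (Suc (Suc (Suc t))) k \<le> b" if "k < n" "N (Suc (Suc t)) k = {}" for k
        using below \<open>T \<le> t\<close> that by auto
      moreover have "i\<^sub>0 < n" "X (Suc t) i\<^sub>0 \<le> b"
        using below \<open>I \<subseteq> {..<n}\<close> \<open>i\<^sub>0 \<in> I\<close> \<open>T \<le> t\<close> by auto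
      ultimately show ?thesis
        using state_max_two_steps_contracting b_le by simp
    qed
  qed
  then show ?thesis
    by (simp add: LIM_zero_iff b_def)
qed

lemma opinion_action_uminus: "opinion_action n phi (\<lambda>t i. - X t i) (\<lambda>t i. - Y t i) N"
proof
  fix t i assume i: "i < n"
  show "- X (Suc t) i = (- X t i + (\<Sum>j\<in>N t i. - Y t j)) / (real (card (N t i)) + 1)"
    using X_Suc[OF i] by (simp add: sum_negf minus_divide_left)
  show "- Y (Suc t) i = phi * - X (Suc t) i + (1 - phi) * ((\<Sum>k<n. - Y t k) / real n)"
    using Y_Suc[OF i] by (simp add: sum_negf algebra_simps)
qed (use n_pos phi_pos phi_less_1 nbrs_agents in auto)

interpretation neg: opinion_action n phi "\<lambda>t i. - X t i" "\<lambda>t i. - Y t i" N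
  by (rule opinion_action_uminus)

lemma neg_state_max: "neg.state_max = (\<lambda>t. - state_min t)"
  unfolding neg.state_max_def state_min_def
  by (simp add: image_Un image_image agents_nonempty)

lemma neg_Y_avg: "neg.Y_avg t = - Y_avg t"
  by (simp add: neg.Y_avg_def Y_avg_def sum_negf)

lemma incseq_state_min: "incseq state_min"
  using neg.decseq_state_max by (simp add: neg_state_max decseq_def incseq_def)

lemma state_min_Suc_contracting:
  assumes "\<And>i. i < n \<Longrightarrow> N (Suc t) i \<noteq> {}"
  shows "state_min t + (1 - phi) / 2 * (Y_avg t - state_min t) \<le> state_min (Suc t)"
proof -
  have "- state_min (Suc t) \<le> - state_min t - (1 - phi) / 2 * (- state_min t - - Y_avg t)"
    using neg.state_max_Suc_contracting[of t, OF assms] unfolding neg_state_max neg_Y_avg .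
  then have "- state_min (Suc t) \<le> - state_min t - (1 - phi) / 2 * (Y_avg t - state_min t)"
    by simp
  then show ?thesis
    by linarith
qed

lemma state_min_tendsto_frozen_min:
  assumes isolated: "\<And>t. T \<le> t \<Longrightarrow> {i. i < n \<and> N t i = {}} = I" and "I \<noteq> {}"
  shows "state_min \<longlonglongrightarrow> Min (X T ` I)"
proof -
  have "I \<subseteq> {..<n}"
    using isolated[of T] by auto
  then have "finite I"
    using finite_subset by blast
  then have "Max ((\<lambda>i. - X T i) ` I) = - Min (X T ` I)"
    using \<open>I \<noteq> {}\<close> by (simp add: image_image)
  then have "(\<lambda>t. - state_min t) \<longlonglongrightarrow> - Min (X T ` I)"
    using neg.state_max_tendsto_frozen_max[where T = T and I = I, OF isolated \<open>I \<noteq> {}\<close>]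
    by (simp add: neg_state_max)
  then show ?thesis
    by (simp add: tendsto_minus_cancel_left)
qed

lemma state_max_state_min_tendsto_consensus:
  assumes "\<And>t i. T \<le> t \<Longrightarrow> i < n \<Longrightarrow> N t i \<noteq> {}"
  obtains L where "state_max \<longlonglongrightarrow> L" and "state_min \<longlonglongrightarrow> L"
proof -
  define c where "c = (1 - phi) / 2"
  have spread: "(\<lambda>t. state_max t - state_min t) \<longlonglongrightarrow> 0"
  proof (rule decseq_tendsto_0_if_eventually_contracting[where k = 1 and q = "1 - c"])
    show "decseq (\<lambda>t. state_max t - state_min t)"
      using decseq_state_max incseq_state_min unfolding decseq_def incseq_def by (meson diff_mono)
    show "0 \<le> state_max t - state_min t" for t
      using state_min_le_state_max[of t] by simp
    show "1 - c < 1"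
      using phi_less_1 by (simp add: c_def)
    show "state_max (t + 1) - state_min (t + 1) \<le> (1 - c) * (state_max t - state_min t)"
      if "T \<le> t" for t
    proof -
      have "\<And>i. i < n \<Longrightarrow> N (Suc t) i \<noteq> {}"
        using assms that by simp
      note contracting = state_max_Suc_contracting[OF this] state_min_Suc_contracting[OF this]
      have "(1 - c) * (state_max t - state_min t)
          = (state_max t - c * (state_max t - Y_avg t)) - (state_min t + c * (Y_avg t - state_min t))"
        by (simp add: algebra_simps)
      then show ?thesis
        using contracting by (simp add: c_def)
    qed
  qed
  have "state_min 0 \<le> state_max t" for t
    using incseq_state_min state_min_le_state_max[of t] unfolding incseq_def by (meson le0 order_trans)
  then obtain L where L: "state_max \<longlonglongrightarrow> L"
    using decseq_convergent[OF decseq_state_max] by blast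
  moreover have "state_min \<longlonglongrightarrow> L"
    using tendsto_diff[OF L spread] by simp
  ultimately show ?thesis
    using that by blast
qed

end

locale opinion_action_model =
  fixes n :: nat and eps phi :: real and x0 y0 :: "nat \<Rightarrow> real"
  assumes "1 \<le> n" and "0 < phi" and "phi < 1"
begin

abbreviation "X \<equiv> xs n eps phi x0 y0"
abbreviation "Y \<equiv> ys n eps phi x0 y0"
abbreviation "N \<equiv> \<lambda>t. nbrs n eps (X t) (Y t)"
abbreviation "P \<equiv> Pmat n eps phi x0 y0"
abbreviation "z \<equiv> zaug n eps phi x0 y0"

sublocale opinion_action n phi X Y N
proof
  show "1 \<le> n" "0 < phi" "phi < 1"
    using opinion_action_model_axioms by (simp_all add: opinion_action_model_def)
  show "N t i \<subseteq> {..<n}" for t i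
    by (auto simp: nbrs_def)
  show "X (Suc t) i = (X t i + (\<Sum>j\<in>N t i. Y t j)) / (real (card (N t i)) + 1)" for t i
    by (simp add: xs_def ys_def step_def Let_def)
  show "Y (Suc t) i = phi * X (Suc t) i + (1 - phi) * ((\<Sum>k<n. Y t k) / real n)" for t i
    by (simp add: xs_def ys_def step_def Let_def)
qed

lemma z_agent: "i < n \<Longrightarrow> z t i = X t i"
  by (simp add: zaug_def)

lemma z_Suc_bounds:
  assumes "j < 2 * n"
  shows "state_min t \<le> z (Suc t) j" and "z (Suc t) j \<le> state_max t"
proof -
  have "state_min t \<le> z (Suc t) j \<and> z (Suc t) j \<le> state_max t"
  proof (cases "j < n")
    case True
    then show ?thesis
      using state_min_le(1) le_state_max(1) by (simp add: zaug_def)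
  next
    case False
    then have "j - n < n"
      using assms by simp
    then show ?thesis
      using False state_min_le(2) le_state_max(2) by (simp add: zaug_def)
  qed
  then show "state_min t \<le> z (Suc t) j" and "z (Suc t) j \<le> state_max t"
    by simp_all
qed

lemma edge_agent_action: "i < n \<Longrightarrow> (i, n + i) \<in> gedges (P t) (2 * n)"
  using phi_pos by (simp add: gedges_def Pmat_def Let_def)

lemma isolated_iff_no_in_edges:
  assumes "i < n"
  shows "N t i = {} \<longleftrightarrow> (\<forall>a. (a, i) \<in> gedges (P t) (2 * n) \<longrightarrow> a = i)"
proof
  assume "N t i = {}"
  then show "\<forall>a. (a, i) \<in> gedges (P t) (2 * n) \<longrightarrow> a = i"
    using assms by (auto simp: gedges_def Pmat_def Let_def split: if_splits)
next
  assume no_in_edges: "\<forall>a. (a, i) \<in> gedges (P t) (2 * n) \<longrightarrow> a = i"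
  show "N t i = {}"
  proof (rule ccontr)
    assume "N t i \<noteq> {}"
    then have "0 < card (N t i)"
      using finite_nbrs card_gt_0_iff by blast
    then have "(n, i) \<in> gedges (P t) (2 * n)"
      using assms phi_less_1 n_pos by (simp add: gedges_def Pmat_def Let_def)
    with no_in_edges assms show False
      by auto
  qed
qed

lemma strongly_connected_imp_nbrs_nonempty:
  assumes "strongly_connected_mat (P t) (2 * n)" "i < n"
  shows "N t i \<noteq> {}"
proof
  assume "N t i = {}"
  then have "\<And>a. (a, i) \<in> gedges (P t) (2 * n) \<Longrightarrow> a = i"
    using isolated_iff_no_in_edges[OF assms(2)] by blast
  moreover have "(n, i) \<in> (gedges (P t) (2 * n))\<^sup>*"
    using assms n_pos by (simp add: strongly_connected_mat_def)
  ultimately have "n = i"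
    by (rule rtrancl_no_in_edges)
  with assms(2) show False
    by simp
qed

lemma singleton_source_is_isolated_agent:
  assumes "cond_source (P t) (2 * n) {i}" "i < 2 * n"
  shows "i < n \<and> N t i = {}"
proof -
  have "i < n"
  proof (rule ccontr)
    assume "\<not> i < n"
    then have "(i - n, i) \<in> gedges (P t) (2 * n)"
      using edge_agent_action[of "i - n" t] assms(2) by simp
    then have "i - n = i"
      by (rule cond_source_singleton_in_edge[OF assms(1)])
    with \<open>\<not> i < n\<close> n_pos show False
      by simp
  qed
  moreover have "N t i = {}"
    using isolated_iff_no_in_edges[OF \<open>i < n\<close>] cond_source_singleton_in_edge[OF assms(1)] by blast
  ultimately show ?thesis ..
qed

lemma agent_not_singleton_sink:
  assumes "i < n"
  shows "\<not> cond_sink (P t) (2 * n) {i}"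
proof
  assume "cond_sink (P t) (2 * n) {i}"
  then have "n + i = i"
    using cond_sink_singleton_out_edge edge_agent_action[OF assms] by blast
  with n_pos show False
    by simp
qed

lemma isolated_agent_scc: "i < n \<Longrightarrow> N t i = {} \<Longrightarrow> scc_of (P t) (2 * n) i = {i}"
  using scc_of_no_in_edges[of i "2 * n" "P t"] isolated_iff_no_in_edges by simp

lemma singleton_sources_eq_isolated_agents:
  assumes "one_sink_singleton_sources (P t) (2 * n) \<Omega>"
  shows "\<Union>(sccs (P t) (2 * n) - {\<Omega>}) = {i. i < n \<and> N t i = {}}"
proof (intro equalityI subsetI)
  fix i assume "i \<in> \<Union>(sccs (P t) (2 * n) - {\<Omega>})"
  then obtain S where S: "S \<in> sccs (P t) (2 * n)" "S \<noteq> \<Omega>" "i \<in> S"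
    by blast
  then have "S = {i}" and "cond_source (P t) (2 * n) S"
    using assms by (auto simp: one_sink_singleton_sources_def card_1_singleton_iff)
  then show "i \<in> {i. i < n \<and> N t i = {}}"
    using singleton_source_is_isolated_agent sccs_bounded[OF S(1,3)] by simp
next
  fix i assume "i \<in> {i. i < n \<and> N t i = {}}"
  then have "i < n" "N t i = {}"
    by simp_all
  then have "scc_of (P t) (2 * n) i \<in> sccs (P t) (2 * n)"
    by (simp add: sccs_def)
  then have "{i} \<in> sccs (P t) (2 * n)"
    using isolated_agent_scc \<open>i < n\<close> \<open>N t i = {}\<close> by simp
  moreover have "{i} \<noteq> \<Omega>"
    using assms agent_not_singleton_sink[OF \<open>i < n\<close>] by (auto simp: one_sink_singleton_sources_def)
  ultimately show "i \<in> \<Union>(sccs (P t) (2 * n) - {\<Omega>})"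
    by blast
qed

lemma consensus_if_no_isolated_agents:
  assumes "\<And>t i. T \<le> t \<Longrightarrow> i < n \<Longrightarrow> N t i \<noteq> {}"
  shows "\<exists>c. \<forall>j<2 * n. (\<lambda>t. z t j) \<longlonglongrightarrow> c"
proof -
  obtain L where L: "state_max \<longlonglongrightarrow> L" "state_min \<longlonglongrightarrow> L"
    using state_max_state_min_tendsto_consensus assms by blast
  have "(\<lambda>t. z t j) \<longlonglongrightarrow> L" if "j < 2 * n" for j
  proof (rule LIMSEQ_imp_Suc)
    show "(\<lambda>t. z (Suc t) j) \<longlonglongrightarrow> L"
      by (rule tendsto_sandwich[OF _ _ L(2,1)]) (simp_all add: z_Suc_bounds[OF that])
  qed
  then show ?thesis
    by blast
qed

lemma clustering_if_isolated_agents_fixed: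
  assumes isolated: "\<And>t. T \<le> t \<Longrightarrow> {i. i < n \<and> N t i = {}} = I" and "I \<noteq> {}"
  shows "\<forall>i\<in>I. \<forall>t\<ge>T. z t i = z T i"
    and "j < 2 * n \<Longrightarrow> (\<lambda>t. infdist (z t j) (convex hull {z T i | i. i \<in> I})) \<longlonglongrightarrow> 0"
proof -
  have "I \<subseteq> {..<n}"
    using isolated[of T] by auto
  show "\<forall>i\<in>I. \<forall>t\<ge>T. z t i = z T i"
  proof (intro ballI allI impI)
    fix i t assume "i \<in> I" "T \<le> t"
    then have "X t i = X T i"
      by (intro X_frozen[where T = T and I = I]) (rule isolated)
    moreover have "i < n"
      using \<open>I \<subseteq> {..<n}\<close> \<open>i \<in> I\<close> by blast
    ultimately show "z t i = z T i"
      by (simp add: z_agent)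
  qed
  have "finite I"
    using \<open>I \<subseteq> {..<n}\<close> finite_subset by blast
  have "{z T i | i. i \<in> I} = z T ` I"
    by (rule Setcompr_eq_image)
  also have "\<dots> = X T ` I"
    using \<open>I \<subseteq> {..<n}\<close> z_agent by (intro image_cong) auto
  finally have frozen_values: "{z T i | i. i \<in> I} = X T ` I" .
  assume "j < 2 * n"
  have "(\<lambda>t. infdist (z (Suc t) j) (convex hull (X T ` I))) \<longlonglongrightarrow> 0"
  proof (rule infdist_tendsto_0_if_squeezed)
    show "Min (X T ` I) \<in> convex hull (X T ` I)" "Max (X T ` I) \<in> convex hull (X T ` I)"
      using \<open>finite I\<close> \<open>I \<noteq> {}\<close> by (simp_all add: hull_inc)
  qed (use state_min_tendsto_frozen_min[OF isolated \<open>I \<noteq> {}\<close>]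
        state_max_tendsto_frozen_max[OF isolated \<open>I \<noteq> {}\<close>] z_Suc_bounds[OF \<open>j < 2 * n\<close>]
        in simp_all)
  then show "(\<lambda>t. infdist (z t j) (convex hull {z T i | i. i \<in> I})) \<longlonglongrightarrow> 0"
    unfolding frozen_values by (rule LIMSEQ_imp_Suc)
qed

lemma consensus_if_strongly_connected:
  assumes "\<And>t. T \<le> t \<Longrightarrow> strongly_connected_mat (P t) (2 * n)"
  shows "\<exists>c. \<forall>j<2 * n. (\<lambda>t. z t j) \<longlonglongrightarrow> c"
  by (rule consensus_if_no_isolated_agents) (rule strongly_connected_imp_nbrs_nonempty[OF assms])

lemma clustering_if_one_sink_singleton_sources:
  assumes stable: "\<And>t. T \<le> t \<Longrightarrow> sccs (P t) (2 * n) = sccs (P T) (2 * n)"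
    and condensation: "\<And>t. T \<le> t \<Longrightarrow> one_sink_singleton_sources (P t) (2 * n) \<Omega>"
  defines "\<Theta> \<equiv> \<Union>(sccs (P T) (2 * n) - {\<Omega>})"
  shows "\<forall>i\<in>\<Theta>. \<forall>t\<ge>T. z t i = z T i"
    and "\<forall>j\<in>\<Omega>. (\<lambda>t. infdist (z t j) (convex hull {z T i | i. i \<in> \<Theta>})) \<longlonglongrightarrow> 0"
proof -
  have isolated: "{i. i < n \<and> N t i = {}} = \<Theta>" if "T \<le> t" for t
    using singleton_sources_eq_isolated_agents[OF condensation[OF that]] stable[OF that]
    by (simp add: \<Theta>_def)
  have "\<Theta> \<noteq> {}"
    using one_sink_singleton_sources_nonempty[OF condensation[OF order_refl]] by (simp add: \<Theta>_def)
  note clustering = clustering_if_isolated_agents_fixed[OF isolated this]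
  show "\<forall>i\<in>\<Theta>. \<forall>t\<ge>T. z t i = z T i"
    by (rule clustering(1))
  have "\<Omega> \<in> sccs (P T) (2 * n)"
    using condensation[OF order_refl] by (simp add: one_sink_singleton_sources_def)
  then show "\<forall>j\<in>\<Omega>. (\<lambda>t. infdist (z t j) (convex hull {z T i | i. i \<in> \<Theta>})) \<longlonglongrightarrow> 0"
    using clustering(2) sccs_bounded by blast
qed

end

theorem theorem3:
  fixes n :: nat and eps phi :: real and x0 y0 :: "nat \<Rightarrow> real" and T :: nat
  defines "P \<equiv> Pmat n eps phi x0 y0"
      and "z \<equiv> zaug n eps phi x0 y0"
  assumes n: "n \<ge> 1"
      and eps: "0 \<le> eps" "eps \<le> 1"
      and phi: "0 < phi" "phi < 1"
      and init: "\<And>i. i < n \<Longrightarrow> 0 \<le> x0 i \<and> x0 i \<le> 1 \<and> 0 \<le> y0 i \<and> y0 i \<le> 1"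
      and T: "T > 0"
      and stab: "\<And>t. t \<ge> T \<Longrightarrow> sccs (P t) (2 * n) = sccs (P T) (2 * n)"
  shows "((\<forall>t\<ge>T. strongly_connected_mat (P t) (2 * n)) \<longrightarrow>
            (\<exists>c. \<forall>i<2 * n. (\<lambda>t. z t i) \<longlonglongrightarrow> c))
       \<and> (\<forall>\<Omega>. (\<forall>t\<ge>T. one_sink_singleton_sources (P t) (2 * n) \<Omega>) \<longrightarrow>
            (let \<Theta> = \<Union>(sccs (P T) (2 * n) - {\<Omega>}) in
              (\<forall>i\<in>\<Theta>. \<forall>t\<ge>T. z t i = z T i) \<and>
              (\<forall>j\<in>\<Omega>. (\<lambda>t. infdist (z t j) (convex hull {z T i | i. i \<in> \<Theta>})) \<longlonglongrightarrow> 0)))"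
proof -
  interpret model: opinion_action_model n eps phi x0 y0
    using n phi by unfold_locales
  show ?thesis
    using model.consensus_if_strongly_connected[of T]
      model.clustering_if_one_sink_singleton_sources[of T, OF stab[unfolded P_def]]
    unfolding P_def z_def Let_def by blast
qed

end
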